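(* Let $p\in\mathbb{R}[\mathbf{x}]$ be a homogeneous polynomial of degree $d$ in $n$ variables and let $r\in\mathbb{N}$. Define \[ p^{(r)}=\max\Big\{\lambda\in\mathbb{R}:\ \Big(\sum_{i=1}^nx_i\Big)^r\Big(p(\mathbf{x})-\lambda\Big(\sum_{i=1}^nx_i\Big)^d\Big)\ \text{has only nonnegative coefficients}\Big\}, \] and let $\underline{f}_{\mathrm{LP}}^{(r+d)}$ be the optimal value of the linear program \[ \min\ L(p)\quad\text{s.t.}\quad L(1)=1,\quad L(1)\le 1,\quad L(\mathbf{x}^\alpha)\ge 0\ (|\alpha|\le r+d),\quad L(\mathbf{x}^\alpha)=L\Big(\mathbf{x}^\alpha\sum_{i=1}^nx_i\Big)\ (|\alpha|\le r+d-1), \] over linear functionals $L:\mathbb{R}[\mathbf{x}]_{r+d}\to\mathbb{R}$ (this is the LP relaxation of order $r+d$ of $\min_{\mathbf{x}\in\Delta_{n-1}}p(\mathbf{x})=\inf\{\int_{\Delta_{n-1}}p\,\mathrm{d}\mu:\mu\in\mathcal{M}(\Delta_{n-1})_+,\ \int_{\Delta_{n-1}}\mathrm{d}\mu=1\}$). Then $p^{(r)}=\underline{f}_{\mathrm{LP}}^{(r+d)}$.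
   Context: $\Delta_{n-1}=\{\mathbf{x}\in\mathbb{R}^n_+:x_1+\dots+x_n=1\}$; $\mathcal{M}(\Delta_{n-1})_+$ is the cone of positive finite Borel measures on $\Delta_{n-1}$; $\mathbb{R}[\mathbf{x}]_{r+d}$ is the space of real polynomials of degree at most $r+d$; $\mathbf{x}^\alpha=x_1^{\alpha_1}\cdots x_n^{\alpha_n}$, $|\alpha|=\sum_i\alpha_i$. *)

theory Defs
  imports "HOL-Analysis.Analysis" "HOL-Library.Poly_Mapping"
begin

text \<open>Real polynomials in the variables x_0, x_1, ... : finitely supported maps from
  exponent vectors (alpha :: nat =>0 nat) to real coefficients; multiplication is the
  usual polynomial product (convolution).\<close>

type_synonym mpoly = "(nat \<Rightarrow>\<^sub>0 nat) \<Rightarrow>\<^sub>0 real"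

definition tdeg :: "(nat \<Rightarrow>\<^sub>0 nat) \<Rightarrow> nat" where
  "tdeg \<alpha> = (\<Sum>i\<in>Poly_Mapping.keys \<alpha>. Poly_Mapping.lookup \<alpha> i)"

definition var :: "nat \<Rightarrow> mpoly" where
  "var i = Poly_Mapping.single (Poly_Mapping.single i 1) 1"

definition const :: "real \<Rightarrow> mpoly" where
  "const c = Poly_Mapping.single 0 c"

text \<open>x_1 + ... + x_n (indices 0..n-1)\<close>
definition sumvars :: "nat \<Rightarrow> mpoly" where
  "sumvars n = (\<Sum>i<n. var i)"

definition homogeneous_in :: "nat \<Rightarrow> nat \<Rightarrow> mpoly \<Rightarrow> bool" where
  "homogeneous_in n d p \<longleftrightarrow>
     (\<forall>\<alpha>\<in>Poly_Mapping.keys p. Poly_Mapping.keys \<alpha> \<subseteq> {..<n} \<and> tdeg \<alpha> = d)"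

definition polya_bound :: "nat \<Rightarrow> nat \<Rightarrow> nat \<Rightarrow> mpoly \<Rightarrow> real" where
  "polya_bound n d r p = Sup {lam. \<forall>\<alpha>.
     Poly_Mapping.lookup (sumvars n ^ r * (p - const lam * sumvars n ^ d)) \<alpha> \<ge> 0}"

text \<open>A linear functional L on R[x]_k (polynomials in x_0..x_{n-1} of degree \<le> k) is
  determined by its values y alpha = L(x^alpha) on the monomial basis; values of y outside
  that basis are irrelevant.\<close>
definition apply_functional :: "((nat \<Rightarrow>\<^sub>0 nat) \<Rightarrow> real) \<Rightarrow> mpoly \<Rightarrow> real" where
  "apply_functional y q = (\<Sum>\<alpha>\<in>Poly_Mapping.keys q. Poly_Mapping.lookup q \<alpha> * y \<alpha>)"

definition mono_set :: "nat \<Rightarrow> nat \<Rightarrow> (nat \<Rightarrow>\<^sub>0 nat) set" where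
  "mono_set n k = {\<alpha>. Poly_Mapping.keys \<alpha> \<subseteq> {..<n} \<and> tdeg \<alpha> \<le> k}"

definition lp_feasible :: "nat \<Rightarrow> nat \<Rightarrow> ((nat \<Rightarrow>\<^sub>0 nat) \<Rightarrow> real) \<Rightarrow> bool" where
  "lp_feasible n k y \<longleftrightarrow>
     apply_functional y 1 = 1 \<and> apply_functional y 1 \<le> 1 \<and>
     (\<forall>\<alpha>\<in>mono_set n k. apply_functional y (Poly_Mapping.single \<alpha> 1) \<ge> 0) \<and>
     (\<forall>\<alpha>\<in>mono_set n k. tdeg \<alpha> + 1 \<le> k \<longrightarrow>
        apply_functional y (Poly_Mapping.single \<alpha> 1) =
        apply_functional y (Poly_Mapping.single \<alpha> 1 * sumvars n))"

definition lp_value :: "nat \<Rightarrow> nat \<Rightarrow> mpoly \<Rightarrow> real" where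
  "lp_value n k p = Inf {apply_functional y p | y. lp_feasible n k y}"

end

theory Submission
  imports Defs
begin

text \<open>Put \<open>s = x\<^sub>1 + \<dots> + x\<^sub>n\<close> and \<open>k = r + d\<close>; let \<open>c\<^sub>\<beta>\<close> be the coefficients of \<open>s\<^sup>r p\<close> and
  \<open>m\<^sub>\<beta>\<close> those of \<open>s\<^sup>k\<close>, which are positive exactly on the monomials of degree \<open>k\<close>. Since
  \<open>s\<^sup>r (p - \<lambda> s\<^sup>d) = s\<^sup>r p - \<lambda> s\<^sup>k\<close>, Polya's condition on \<open>\<lambda>\<close> says \<open>\<lambda> \<le> c\<^sub>\<beta> / m\<^sub>\<beta>\<close> for all such
  \<open>\<beta>\<close>, so the Polya bound is the minimum \<open>\<mu>\<close> of these ratios. A feasible \<open>L\<close> is invariant under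
  multiplication by \<open>s\<close> up to degree \<open>k\<close>, hence \<open>L(p) - \<lambda> = L(s\<^sup>r p - \<lambda> s\<^sup>k)\<close>, which is \<open>\<ge> 0\<close>
  because \<open>L\<close> is nonnegative on monomials; so \<open>L(p) \<ge> \<mu>\<close>. Equality is attained by the
  functional that lifts \<open>x\<^sup>\<alpha>\<close> to the degree-\<open>k\<close> form \<open>x\<^sup>\<alpha> s\<^sup>k\<^sup>-\<^sup>|\<^sup>\<alpha>\<^sup>|\<close> and returns its
  coefficient at a minimizing \<open>\<beta>\<close>, divided by \<open>m\<^sub>\<beta>\<close>.\<close>

abbreviation monom :: "(nat \<Rightarrow>\<^sub>0 nat) \<Rightarrow> mpoly" where
  "monom \<alpha> \<equiv> Poly_Mapping.single \<alpha> 1"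

lemma lookup_const_mult: "Poly_Mapping.lookup (const c * f) \<alpha> = c * Poly_Mapping.lookup f \<alpha>"
  unfolding const_def mult_map_scale_conv_mult[symmetric]
  by (simp add: map.rep_eq when_def)

lemma lookup_single_mult_add:
  "Poly_Mapping.lookup (Poly_Mapping.single \<alpha> c * (f :: mpoly)) (\<alpha> + \<beta>) = c * Poly_Mapping.lookup f \<beta>"
  by (simp add: lookup_mult lookup_single when_mult)

lemma poly_mapping_sum_single_lookup:
  "(\<Sum>\<alpha>\<in>Poly_Mapping.keys q. Poly_Mapping.single \<alpha> (Poly_Mapping.lookup q \<alpha>)) = q"
  by (rule poly_mapping_eqI)
     (simp add: lookup_sum lookup_single when_def sum.delta in_keys_iff)


subsection \<open>Total degree and homogeneity\<close>

lemma tdeg_eq_sum: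
  "finite S \<Longrightarrow> Poly_Mapping.keys \<alpha> \<subseteq> S \<Longrightarrow> tdeg \<alpha> = (\<Sum>i\<in>S. Poly_Mapping.lookup \<alpha> i)"
  unfolding tdeg_def by (rule sum.mono_neutral_left) (auto simp: in_keys_iff)

lemma tdeg_add: "tdeg (\<alpha> + \<beta>) = tdeg \<alpha> + tdeg \<beta>"
proof -
  let ?S = "Poly_Mapping.keys \<alpha> \<union> Poly_Mapping.keys \<beta>"
  have "tdeg (\<alpha> + \<beta>) = (\<Sum>i\<in>?S. Poly_Mapping.lookup (\<alpha> + \<beta>) i)"
    using keys_add[of \<alpha> \<beta>] by (intro tdeg_eq_sum) auto
  also have "\<dots> = (\<Sum>i\<in>?S. Poly_Mapping.lookup \<alpha> i) + (\<Sum>i\<in>?S. Poly_Mapping.lookup \<beta> i)"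
    by (simp add: lookup_add sum.distrib)
  also have "\<dots> = tdeg \<alpha> + tdeg \<beta>"
    by (simp add: tdeg_eq_sum[symmetric])
  finally show ?thesis .
qed

lemma tdeg_0 [simp]: "tdeg 0 = 0"
  by (simp add: tdeg_def)

lemma tdeg_single [simp]: "tdeg (Poly_Mapping.single i k) = k"
  by (simp add: tdeg_def)

lemma tdeg_eq_0_iff: "tdeg \<alpha> = 0 \<longleftrightarrow> \<alpha> = 0"
proof
  assume "tdeg \<alpha> = 0"
  then have "\<forall>i\<in>Poly_Mapping.keys \<alpha>. Poly_Mapping.lookup \<alpha> i = 0"
    unfolding tdeg_def by simp
  then show "\<alpha> = 0"
    by (metis in_keys_iff keys_eq_empty ex_in_conv)
qed simp

lemma homogeneous_in_mult:
  "homogeneous_in n a f \<Longrightarrow> homogeneous_in n b g \<Longrightarrow> homogeneous_in n (a + b) (f * g)"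
  using keys_mult[of f g] unfolding homogeneous_in_def
  by (fastforce simp: tdeg_add dest!: subsetD[OF keys_add])

lemma homogeneous_in_add:
  "homogeneous_in n a f \<Longrightarrow> homogeneous_in n a g \<Longrightarrow> homogeneous_in n a (f + g)"
  unfolding homogeneous_in_def using keys_add[of f g] by blast

lemma homogeneous_in_diff:
  "homogeneous_in n a f \<Longrightarrow> homogeneous_in n a g \<Longrightarrow> homogeneous_in n a (f - g)"
  unfolding homogeneous_in_def using keys_diff[of f g] by blast

lemma homogeneous_in_0 [simp]: "homogeneous_in n a 0"
  by (simp add: homogeneous_in_def)

lemma homogeneous_in_1 [simp]: "homogeneous_in n 0 1"
  unfolding homogeneous_in_def by simp

lemma homogeneous_in_const_mult:
  assumes "homogeneous_in n a f"
  shows "homogeneous_in n a (const c * f)"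
proof -
  have "homogeneous_in n 0 (const c)"
    unfolding homogeneous_in_def const_def by simp
  from homogeneous_in_mult[OF this assms] show ?thesis
    by simp
qed

lemma homogeneous_in_sum:
  "(\<And>i. i \<in> I \<Longrightarrow> homogeneous_in n a (f i)) \<Longrightarrow> homogeneous_in n a (sum f I)"
  by (induction I rule: infinite_finite_induct) (auto intro: homogeneous_in_add)

lemma homogeneous_in_sumvars_power: "homogeneous_in n j (sumvars n ^ j)"
proof -
  have "homogeneous_in n 1 (sumvars n)"
    unfolding sumvars_def var_def by (rule homogeneous_in_sum) (simp add: homogeneous_in_def)
  then show ?thesis
    by (induction j) (auto dest: homogeneous_in_mult)
qed

subsection \<open>Coefficients of powers of \<open>x\<^sub>1 + \<dots> + x\<^sub>n\<close>\<close>

definition nonneg_coeffs :: "mpoly \<Rightarrow> bool" where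
  "nonneg_coeffs f \<longleftrightarrow> (\<forall>\<alpha>. Poly_Mapping.lookup f \<alpha> \<ge> 0)"

lemma nonneg_coeffs_mult: "nonneg_coeffs f \<Longrightarrow> nonneg_coeffs g \<Longrightarrow> nonneg_coeffs (f * g)"
  unfolding nonneg_coeffs_def lookup_mult
  by (auto intro!: mult_nonneg_nonneg simp: Sum_any.expand_set sum_nonneg when_def)

lemma nonneg_coeffs_single: "c \<ge> 0 \<Longrightarrow> nonneg_coeffs (Poly_Mapping.single \<alpha> c)"
  by (simp add: nonneg_coeffs_def lookup_single when_def)

lemma nonneg_coeffs_sumvars_power: "nonneg_coeffs (sumvars n ^ j)"
proof -
  have "nonneg_coeffs (sumvars n)"
    unfolding nonneg_coeffs_def sumvars_def var_def
    by (auto simp: lookup_sum lookup_single when_def intro!: sum_nonneg)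
  then show ?thesis
    by (induction j) (auto intro: nonneg_coeffs_mult simp: nonneg_coeffs_single[of 1 0, simplified])
qed

lemma lookup_sumvars_power_pos:
  assumes "Poly_Mapping.keys \<beta> \<subseteq> {..<n}" "tdeg \<beta> = k"
  shows "Poly_Mapping.lookup (sumvars n ^ k) \<beta> > 0"
  using assms
proof (induction k arbitrary: \<beta>)
  case 0
  then show ?case by (simp add: tdeg_eq_0_iff)
next
  case (Suc k)
  then obtain i where i: "i \<in> Poly_Mapping.keys \<beta>"
    by (metis keys_eq_empty ex_in_conv tdeg_0 nat.distinct(1))
  with Suc.prems have "i < n" by auto
  define \<gamma> where "\<gamma> = \<beta> - Poly_Mapping.single i 1"
  have \<beta>: "\<beta> = Poly_Mapping.single i 1 + \<gamma>"
    using i unfolding \<gamma>_def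
    by (intro poly_mapping_eqI) (auto simp: lookup_add lookup_minus lookup_single when_def in_keys_iff)
  have "Poly_Mapping.keys \<gamma> \<subseteq> Poly_Mapping.keys \<beta>"
    using \<beta> by (metis add_eq_0_iff_both_eq_0 in_keys_iff lookup_add subsetI)
  moreover have "tdeg \<gamma> = k"
    using Suc.prems(2) by (simp add: \<beta> tdeg_add)
  ultimately have "Poly_Mapping.lookup (sumvars n ^ k) \<gamma> > 0"
    using Suc.prems(1) by (intro Suc.IH) auto
  also have "Poly_Mapping.lookup (sumvars n ^ k) \<gamma> = Poly_Mapping.lookup (var i * sumvars n ^ k) \<beta>"
    unfolding var_def by (subst \<beta>, subst lookup_single_mult_add) simp
  also have "\<dots> \<le> (\<Sum>j<n. Poly_Mapping.lookup (var j * sumvars n ^ k) \<beta>)"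
    using \<open>i < n\<close> nonneg_coeffs_mult[OF nonneg_coeffs_single nonneg_coeffs_sumvars_power]
    by (intro member_le_sum) (auto simp: var_def nonneg_coeffs_def)
  also have "\<dots> = Poly_Mapping.lookup (sumvars n ^ Suc k) \<beta>"
    by (simp add: sumvars_def sum_distrib_right lookup_sum)
  finally show ?case .
qed

lemma keys_sumvars_power:
  "Poly_Mapping.keys (sumvars n ^ k) = {\<beta>. Poly_Mapping.keys \<beta> \<subseteq> {..<n} \<and> tdeg \<beta> = k}"
proof
  show "Poly_Mapping.keys (sumvars n ^ k) \<subseteq> {\<beta>. Poly_Mapping.keys \<beta> \<subseteq> {..<n} \<and> tdeg \<beta> = k}"
    using homogeneous_in_sumvars_power[of n k] unfolding homogeneous_in_def by blast
  show "{\<beta>. Poly_Mapping.keys \<beta> \<subseteq> {..<n} \<and> tdeg \<beta> = k} \<subseteq> Poly_Mapping.keys (sumvars n ^ k)"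
  proof
    fix \<beta> assume "\<beta> \<in> {\<beta>. Poly_Mapping.keys \<beta> \<subseteq> {..<n} \<and> tdeg \<beta> = k}"
    then have "Poly_Mapping.lookup (sumvars n ^ k) \<beta> > 0"
      by (intro lookup_sumvars_power_pos) auto
    then show "\<beta> \<in> Poly_Mapping.keys (sumvars n ^ k)"
      by (simp add: in_keys_iff)
  qed
qed

lemma keys_sumvars_power_nonempty:
  assumes "n \<ge> 1"
  shows "Poly_Mapping.keys (sumvars n ^ k) \<noteq> {}"
proof -
  have "Poly_Mapping.single 0 k \<in> Poly_Mapping.keys (sumvars n ^ k)"
    using assms by (simp add: keys_sumvars_power)
  then show ?thesis
    by blast
qed

subsection \<open>Functionals given by their values on monomials\<close>

lemma apply_functional_eq_sum:
  "finite A \<Longrightarrow> Poly_Mapping.keys q \<subseteq> A \<Longrightarrow>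
    apply_functional y q = (\<Sum>\<alpha>\<in>A. Poly_Mapping.lookup q \<alpha> * y \<alpha>)"
  unfolding apply_functional_def by (rule sum.mono_neutral_left) (auto simp: in_keys_iff)

lemma apply_functional_add:
  "apply_functional y (f + g) = apply_functional y f + apply_functional y g"
proof -
  let ?S = "Poly_Mapping.keys f \<union> Poly_Mapping.keys g"
  have "apply_functional y (f + g) = (\<Sum>\<alpha>\<in>?S. Poly_Mapping.lookup (f + g) \<alpha> * y \<alpha>)"
    using keys_add[of f g] by (intro apply_functional_eq_sum) auto
  also have "\<dots> = (\<Sum>\<alpha>\<in>?S. Poly_Mapping.lookup f \<alpha> * y \<alpha>) + (\<Sum>\<alpha>\<in>?S. Poly_Mapping.lookup g \<alpha> * y \<alpha>)"
    by (simp add: lookup_add sum.distrib distrib_right)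
  also have "\<dots> = apply_functional y f + apply_functional y g"
    by (simp add: apply_functional_eq_sum[symmetric])
  finally show ?thesis .
qed

lemma apply_functional_0 [simp]: "apply_functional y 0 = 0"
  by (simp add: apply_functional_def)

lemma apply_functional_diff:
  "apply_functional y (f - g) = apply_functional y f - apply_functional y g"
  using apply_functional_add[of y "f - g" g] by simp

lemma apply_functional_const_mult:
  "apply_functional y (const c * f) = c * apply_functional y f"
proof -
  have "Poly_Mapping.keys (const c * f) \<subseteq> Poly_Mapping.keys f"
    by (auto simp: in_keys_iff lookup_const_mult)
  then have "apply_functional y (const c * f) =
      (\<Sum>\<alpha>\<in>Poly_Mapping.keys f. Poly_Mapping.lookup (const c * f) \<alpha> * y \<alpha>)"
    by (intro apply_functional_eq_sum) auto
  then show ?thesis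
    by (simp add: lookup_const_mult apply_functional_def sum_distrib_left mult.assoc)
qed

lemma apply_functional_sum:
  "apply_functional y (sum f I) = (\<Sum>i\<in>I. apply_functional y (f i))"
  by (induction I rule: infinite_finite_induct) (auto simp: apply_functional_add)

lemma apply_functional_monom [simp]: "apply_functional y (monom \<alpha>) = y \<alpha>"
  by (simp add: apply_functional_def)

lemma apply_functional_1 [simp]: "apply_functional y 1 = y 0"
  by (simp add: apply_functional_def)

lemma apply_functional_mult:
  "apply_functional y (q * f) =
    (\<Sum>\<alpha>\<in>Poly_Mapping.keys q. Poly_Mapping.lookup q \<alpha> * apply_functional y (monom \<alpha> * f))"
proof -
  have "q * f = (\<Sum>\<alpha>\<in>Poly_Mapping.keys q. const (Poly_Mapping.lookup q \<alpha>) * (monom \<alpha> * f))"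
    by (subst (1) poly_mapping_sum_single_lookup[symmetric])
       (simp add: sum_distrib_right const_def mult_single flip: mult.assoc)
  then show ?thesis
    by (simp add: apply_functional_sum apply_functional_const_mult)
qed

subsection \<open>Feasible functionals of the LP relaxation\<close>

lemma lp_feasible_apply_mult_sumvars:
  assumes "lp_feasible n k y" "homogeneous_in n j q" "j + 1 \<le> k"
  shows "apply_functional y (q * sumvars n) = apply_functional y q"
proof -
  have monom_step: "apply_functional y (monom \<alpha> * sumvars n) = y \<alpha>"
    if "\<alpha> \<in> Poly_Mapping.keys q" for \<alpha>
  proof -
    from that assms(2,3) have "\<alpha> \<in> mono_set n k" "tdeg \<alpha> + 1 \<le> k"
      unfolding homogeneous_in_def mono_set_def by auto
    with assms(1) show ?thesis
      unfolding lp_feasible_def by simp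
  qed
  have "apply_functional y (q * sumvars n) =
      (\<Sum>\<alpha>\<in>Poly_Mapping.keys q. Poly_Mapping.lookup q \<alpha> * apply_functional y (monom \<alpha> * sumvars n))"
    by (rule apply_functional_mult)
  also have "\<dots> = (\<Sum>\<alpha>\<in>Poly_Mapping.keys q. Poly_Mapping.lookup q \<alpha> * y \<alpha>)"
    by (intro sum.cong refl) (simp add: monom_step)
  also have "\<dots> = apply_functional y q"
    by (simp add: apply_functional_def)
  finally show ?thesis .
qed

lemma lp_feasible_apply_mult_sumvars_power:
  assumes "lp_feasible n k y" "homogeneous_in n j q" "j + m \<le> k"
  shows "apply_functional y (q * sumvars n ^ m) = apply_functional y q"
  using assms(3)
proof (induction m)
  case (Suc m)
  have "homogeneous_in n (j + m) (q * sumvars n ^ m)"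
    by (rule homogeneous_in_mult[OF assms(2) homogeneous_in_sumvars_power])
  then have "apply_functional y (q * sumvars n ^ m * sumvars n) = apply_functional y (q * sumvars n ^ m)"
    using Suc.prems by (intro lp_feasible_apply_mult_sumvars[OF assms(1)]) auto
  with Suc show ?case
    by (simp add: mult.assoc mult.commute[of "sumvars n"])
qed simp

lemma lp_feasible_apply_nonneg:
  assumes "lp_feasible n k y" "homogeneous_in n j q" "j \<le> k" "nonneg_coeffs q"
  shows "apply_functional y q \<ge> 0"
  unfolding apply_functional_def
proof (rule sum_nonneg)
  fix \<alpha> assume "\<alpha> \<in> Poly_Mapping.keys q"
  with assms(2,3) have "\<alpha> \<in> mono_set n k"
    unfolding homogeneous_in_def mono_set_def by auto
  with assms(1,4) show "Poly_Mapping.lookup q \<alpha> * y \<alpha> \<ge> 0"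
    unfolding lp_feasible_def nonneg_coeffs_def by simp
qed

lemma polya_certificate_le_apply_functional:
  assumes "lp_feasible n (r + d) y" "homogeneous_in n d p"
    and "nonneg_coeffs (sumvars n ^ r * (p - const lam * sumvars n ^ d))"
  shows "lam \<le> apply_functional y p"
proof -
  let ?s = "sumvars n"
  have "homogeneous_in n (r + d) (?s ^ r * (p - const lam * ?s ^ d))"
    by (intro homogeneous_in_mult homogeneous_in_diff homogeneous_in_sumvars_power assms(2)
        homogeneous_in_const_mult)
  with assms(1,3) have "0 \<le> apply_functional y (?s ^ r * (p - const lam * ?s ^ d))"
    by (intro lp_feasible_apply_nonneg) auto
  also have "?s ^ r * (p - const lam * ?s ^ d) = p * ?s ^ r - const lam * (1 * ?s ^ (r + d))"
    by (simp add: algebra_simps power_add)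
  also have "apply_functional y \<dots> = apply_functional y p - lam"
    using lp_feasible_apply_mult_sumvars_power[OF assms(1) assms(2), of r]
      lp_feasible_apply_mult_sumvars_power[OF assms(1) homogeneous_in_1, of "r + d"] assms(1)
    unfolding lp_feasible_def by (simp add: apply_functional_diff apply_functional_const_mult)
  finally show ?thesis by simp
qed

subsection \<open>The optimal value\<close>

definition min_coeff_ratio :: "nat \<Rightarrow> nat \<Rightarrow> mpoly \<Rightarrow> real" where
  "min_coeff_ratio n k q =
    (MIN \<beta>\<in>Poly_Mapping.keys (sumvars n ^ k).
      Poly_Mapping.lookup q \<beta> / Poly_Mapping.lookup (sumvars n ^ k) \<beta>)"

lemma nonneg_coeffs_diff_sumvars_power_iff:
  assumes "n \<ge> 1" "homogeneous_in n k q"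
  shows "nonneg_coeffs (q - const lam * sumvars n ^ k) \<longleftrightarrow> lam \<le> min_coeff_ratio n k q"
proof -
  let ?m = "Poly_Mapping.lookup (sumvars n ^ k)"
  have keys_q: "Poly_Mapping.keys q \<subseteq> Poly_Mapping.keys (sumvars n ^ k)"
    using assms(2) unfolding keys_sumvars_power homogeneous_in_def by blast
  have "0 \<le> Poly_Mapping.lookup q \<beta> - lam * ?m \<beta> \<longleftrightarrow> lam \<le> Poly_Mapping.lookup q \<beta> / ?m \<beta>"
    if "\<beta> \<in> Poly_Mapping.keys (sumvars n ^ k)" for \<beta>
  proof -
    have "?m \<beta> > 0"
      using that nonneg_coeffs_sumvars_power[of n k]
      by (auto simp: nonneg_coeffs_def in_keys_iff order_less_le)
    then show ?thesis
      by (simp add: pos_le_divide_eq)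
  qed
  moreover have "Poly_Mapping.lookup q \<beta> = 0" "?m \<beta> = 0"
    if "\<beta> \<notin> Poly_Mapping.keys (sumvars n ^ k)" for \<beta>
    using that keys_q by (auto simp: in_keys_iff)
  ultimately have "nonneg_coeffs (q - const lam * sumvars n ^ k) \<longleftrightarrow>
      (\<forall>\<beta>\<in>Poly_Mapping.keys (sumvars n ^ k). lam \<le> Poly_Mapping.lookup q \<beta> / ?m \<beta>)"
    unfolding nonneg_coeffs_def
    by (metis lookup_minus lookup_const_mult diff_zero mult_zero_right order_refl)
  then show ?thesis
    using keys_sumvars_power_nonempty[OF assms(1)] by (simp add: min_coeff_ratio_def Min_ge_iff)
qed

lemma polya_certificate_iff:
  assumes "n \<ge> 1" "homogeneous_in n d p"
  shows "nonneg_coeffs (sumvars n ^ r * (p - const lam * sumvars n ^ d)) \<longleftrightarrow>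
    lam \<le> min_coeff_ratio n (r + d) (sumvars n ^ r * p)"
proof -
  have "sumvars n ^ r * (p - const lam * sumvars n ^ d) =
      sumvars n ^ r * p - const lam * sumvars n ^ (r + d)"
    by (simp add: algebra_simps power_add)
  then show ?thesis
    using nonneg_coeffs_diff_sumvars_power_iff[OF assms(1)
        homogeneous_in_mult[OF homogeneous_in_sumvars_power assms(2)]]
    by simp
qed

lemma polya_bound_eq_min_coeff_ratio:
  assumes "n \<ge> 1" "homogeneous_in n d p"
  shows "polya_bound n d r p = min_coeff_ratio n (r + d) (sumvars n ^ r * p)"
proof -
  have "{lam. \<forall>\<alpha>. Poly_Mapping.lookup (sumvars n ^ r * (p - const lam * sumvars n ^ d)) \<alpha> \<ge> 0} =
      {..min_coeff_ratio n (r + d) (sumvars n ^ r * p)}"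
    using polya_certificate_iff[OF assms] by (auto simp: nonneg_coeffs_def)
  then show ?thesis
    by (simp add: polya_bound_def)
qed

definition lifted_coeff_functional :: "nat \<Rightarrow> nat \<Rightarrow> (nat \<Rightarrow>\<^sub>0 nat) \<Rightarrow> (nat \<Rightarrow>\<^sub>0 nat) \<Rightarrow> real"
  where "lifted_coeff_functional n k \<beta> \<alpha> =
    Poly_Mapping.lookup (monom \<alpha> * sumvars n ^ (k - tdeg \<alpha>)) \<beta> / Poly_Mapping.lookup (sumvars n ^ k) \<beta>"

lemma lp_feasible_lifted_coeff_functional:
  assumes "\<beta> \<in> Poly_Mapping.keys (sumvars n ^ k)"
  shows "lp_feasible n k (lifted_coeff_functional n k \<beta>)"
proof -
  let ?y = "lifted_coeff_functional n k \<beta>" and ?s = "sumvars n"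
  have "?y 0 = 1"
    using assms by (simp add: lifted_coeff_functional_def in_keys_iff)
  moreover have "?y \<alpha> \<ge> 0" for \<alpha>
    using nonneg_coeffs_mult[OF nonneg_coeffs_single[of 1] nonneg_coeffs_sumvars_power]
      nonneg_coeffs_sumvars_power
    unfolding lifted_coeff_functional_def nonneg_coeffs_def by simp
  moreover have "apply_functional ?y (monom \<alpha> * ?s) = ?y \<alpha>" if "tdeg \<alpha> + 1 \<le> k" for \<alpha>
  proof -
    let ?e = "\<lambda>i. \<alpha> + Poly_Mapping.single i 1"
    have monom_mult_s: "monom \<alpha> * ?s = (\<Sum>i<n. monom (?e i))"
      unfolding sumvars_def var_def by (simp add: sum_distrib_left mult_single)
    have "(\<Sum>i<n. monom (?e i) * ?s ^ (k - tdeg (?e i))) = monom \<alpha> * ?s * ?s ^ (k - tdeg \<alpha> - 1)"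
      by (simp add: monom_mult_s sum_distrib_right tdeg_add)
    also have "\<dots> = monom \<alpha> * ?s ^ Suc (k - tdeg \<alpha> - 1)"
      by (simp add: mult.assoc)
    also have "Suc (k - tdeg \<alpha> - 1) = k - tdeg \<alpha>"
      using that by simp
    finally have "(\<Sum>i<n. monom (?e i) * ?s ^ (k - tdeg (?e i))) = monom \<alpha> * ?s ^ (k - tdeg \<alpha>)" .
    then show ?thesis
      by (simp add: monom_mult_s apply_functional_sum lifted_coeff_functional_def
          flip: sum_divide_distrib lookup_sum)
  qed
  ultimately show ?thesis
    unfolding lp_feasible_def by simp
qed

lemma apply_lifted_coeff_functional:
  assumes "homogeneous_in n k q" "tdeg \<beta> = k"
  shows "apply_functional (lifted_coeff_functional n k \<beta>) q =
    Poly_Mapping.lookup q \<beta> / Poly_Mapping.lookup (sumvars n ^ k) \<beta>"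
proof -
  let ?y = "lifted_coeff_functional n k \<beta>" and ?m = "Poly_Mapping.lookup (sumvars n ^ k) \<beta>"
  have "apply_functional ?y q = (\<Sum>\<alpha>\<in>Poly_Mapping.keys q \<union> {\<beta>}. Poly_Mapping.lookup q \<alpha> * ?y \<alpha>)"
    by (rule apply_functional_eq_sum) auto
  also have "\<dots> = (\<Sum>\<alpha>\<in>Poly_Mapping.keys q \<union> {\<beta>}. if \<alpha> = \<beta> then Poly_Mapping.lookup q \<beta> / ?m else 0)"
  proof (rule sum.cong)
    fix \<alpha> assume "\<alpha> \<in> Poly_Mapping.keys q \<union> {\<beta>}"
    with assms have "tdeg \<alpha> = k"
      unfolding homogeneous_in_def by auto
    then show "Poly_Mapping.lookup q \<alpha> * ?y \<alpha> = (if \<alpha> = \<beta> then Poly_Mapping.lookup q \<beta> / ?m else 0)"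
      by (simp add: lifted_coeff_functional_def lookup_single)
  qed simp
  also have "\<dots> = Poly_Mapping.lookup q \<beta> / ?m"
    by (simp add: sum.delta)
  finally show ?thesis .
qed

lemma lp_feasible_attains_min_coeff_ratio:
  assumes "n \<ge> 1" "homogeneous_in n d p"
  obtains y where "lp_feasible n (r + d) y"
    and "apply_functional y p = min_coeff_ratio n (r + d) (sumvars n ^ r * p)"
proof -
  let ?s = "sumvars n" and ?k = "r + d"
  let ?ratio = "\<lambda>\<beta>. Poly_Mapping.lookup (?s ^ r * p) \<beta> / Poly_Mapping.lookup (?s ^ ?k) \<beta>"
  have "min_coeff_ratio n ?k (?s ^ r * p) \<in> ?ratio ` Poly_Mapping.keys (?s ^ ?k)"
    unfolding min_coeff_ratio_def using keys_sumvars_power_nonempty[OF assms(1)]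
    by (intro Min_in finite_imageI finite_keys) blast
  then obtain \<beta> where ratio: "min_coeff_ratio n ?k (?s ^ r * p) = ?ratio \<beta>"
    and \<beta>: "\<beta> \<in> Poly_Mapping.keys (?s ^ ?k)"
    by (rule imageE)
  let ?y = "lifted_coeff_functional n ?k \<beta>"
  have feasible: "lp_feasible n ?k ?y"
    by (rule lp_feasible_lifted_coeff_functional[OF \<beta>])
  have "apply_functional ?y p = apply_functional ?y (?s ^ r * p)"
    using lp_feasible_apply_mult_sumvars_power[OF feasible assms(2), of r] by (simp add: mult.commute)
  also have "\<dots> = ?ratio \<beta>"
    using \<beta> by (intro apply_lifted_coeff_functional homogeneous_in_mult[OF homogeneous_in_sumvars_power
        assms(2)]) (simp add: keys_sumvars_power)
  finally show ?thesis
    using that feasible ratio by simp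
qed

theorem theorem11:
  fixes n d r :: nat and p :: mpoly
  assumes "n \<ge> 1"
    and "homogeneous_in n d p"
  shows "polya_bound n d r p = lp_value n (r + d) p"
proof -
  let ?\<mu> = "min_coeff_ratio n (r + d) (sumvars n ^ r * p)"
  obtain y\<^sub>0 where y\<^sub>0: "lp_feasible n (r + d) y\<^sub>0" "apply_functional y\<^sub>0 p = ?\<mu>"
    using lp_feasible_attains_min_coeff_ratio[OF assms] .
  have lower: "?\<mu> \<le> apply_functional y p" if "lp_feasible n (r + d) y" for y
    using polya_certificate_le_apply_functional[OF that assms(2)] polya_certificate_iff[OF assms]
    by blast
  have "lp_value n (r + d) p = ?\<mu>"
    unfolding lp_value_def using y\<^sub>0(1) y\<^sub>0(2)[symmetric] lower
    by (intro cInf_eq_minimum) blast+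
  with polya_bound_eq_min_coeff_ratio[OF assms] show ?thesis
    by simp
qed

end
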